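(* Let $(\mathbf f,\mathbf g)$ be a vector admissible system with potential $U$. Let $(\mathbf x,\epsilon)\in\mathcal X\times\mathcal E$ with $\mathbf x\preceq\mathbf f(\mathbf g(\mathbf x);\epsilon)$ or $\mathbf x\succeq\mathbf f(\mathbf g(\mathbf x);\epsilon)$. Then the limit $\mathbf x^\infty(\mathbf x;\epsilon)$ exists and $U(\mathbf x;\epsilon)\ge U(\mathbf x^\infty(\mathbf x;\epsilon);\epsilon)$.
   Context: Let $d\in\mathbb N$, $\mathcal X=[0,1]^d$, $\mathcal E=[0,1]$, $\mathcal X^\circ=\mathcal X\setminus\{\mathbf 0\}$. Vectors are row vectors; $\mathbf x\preceq\mathbf y$ means $x_i\le y_i$ for all $i$. For a vector-valued function $\mathbf h$ of $\mathbf x$, $\mathbf h'(\mathbf x)$ denotes its Jacobian matrix $[\partial h_i/\partial x_j]_{i,j}$; for a scalar function $F(\mathbf x;\epsilon)$, $F'(\mathbf x;\epsilon)$ denotes its gradient in $\mathbf x$ (a row vector). Let $\mathbf D$ be a $d\times d$ diagonal matrix with positive diagonal entries, $\mathbf f:\mathcal X\times\mathcal E\to\mathcal X$, $\mathbf g:\mathcal X\to\mathcal X$, and $F:\mathcal X\times\mathcal E\to\mathbb R$, $G:\mathcal X\to\mathbb R$ functionals with $F'(\mathbf x;\epsilon)=\mathbf f(\mathbf x;\epsilon)\mathbf D$ and $G'(\mathbf x)=\mathbf g(\mathbf x)\mathbf D$, normalized so that $F(\mathbf 0;\epsilon)=G(\mathbf 0)=0$. The pair $(\mathbf f,\mathbf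 g)$ is a vector admissible system if: (i) $\mathbf f,\mathbf g$ are twice continuously differentiable; (ii) $\mathbf f(\mathbf x;\epsilon)$ and $\mathbf g(\mathbf x)$ are non-decreasing in $\mathbf x$ with respect to $\preceq$; (iii) for each $\mathbf x\in\mathcal X^\circ$, $\mathbf f(\mathbf x;\epsilon)$ is strictly increasing in $\epsilon$, i.e. $\epsilon_1<\epsilon_2$ implies $\mathbf f(\mathbf x;\epsilon_1)\preceq\mathbf f(\mathbf x;\epsilon_2)$ and $\mathbf f(\mathbf x;\epsilon_1)\neq\mathbf f(\mathbf x;\epsilon_2)$; (iv) $\mathbf f(\mathbf 0;\epsilon)=\mathbf f(\mathbf x;0)=\mathbf g(\mathbf 0)=\mathbf 0$ and $F(\mathbf x;0)=0$. The associated recursion is $\mathbf x^{(\ell+1)}=\mathbf f(\mathbf g(\mathbf x^{(\ell)});\epsilon)$. The potential function is $U(\mathbf x;\epsilon)=\mathbf g(\mathbf x)\mathbf D\mathbf x^{\mathsf T}-G(\mathbf x)-F(\mathbf g(\mathbf x);\epsilon)$. For $(\mathbf x,\epsilon)\in\mathcal X\times\mathcal E$, let $\mathbf x^{(0)}=\mathbf x$ and run the recursion; $\mathbf x^\infty(\mathbf x;\epsilon)=\lim_{\ell\to\infty}\mathbf x^{(\ell)}$ whenever this limit exists. *)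

theory Defs
  imports "HOL-Analysis.Analysis"
begin

definition cube :: "(real ^ 'n) set" where
  "cube = {x. \<forall>i. 0 \<le> x $ i \<and> x $ i \<le> 1}"

definition C2_on :: "'a::real_normed_vector set \<Rightarrow> ('a \<Rightarrow> 'b::real_normed_vector) \<Rightarrow> bool" where
  "C2_on S h \<longleftrightarrow> (\<exists>h' :: 'a \<Rightarrow> ('a \<Rightarrow>\<^sub>L 'b). \<exists>h'' :: 'a \<Rightarrow> ('a \<Rightarrow>\<^sub>L ('a \<Rightarrow>\<^sub>L 'b)).
      (\<forall>x\<in>S. (h has_derivative blinfun_apply (h' x)) (at x within S)) \<and>
      (\<forall>x\<in>S. (h' has_derivative blinfun_apply (h'' x)) (at x within S)) \<and>
      continuous_on S h'')"

text \<open>Row vector times diagonal matrix D = diag(dd) times column vector: u D v^T.\<close>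
definition dform :: "real ^ 'n \<Rightarrow> real ^ 'n \<Rightarrow> real ^ 'n \<Rightarrow> real" where
  "dform dd u v = (\<Sum>i\<in>UNIV. u $ i * dd $ i * v $ i)"

definition vector_admissible ::
  "(real ^ 'n \<Rightarrow> real \<Rightarrow> real ^ 'n) \<Rightarrow> (real ^ 'n \<Rightarrow> real ^ 'n) \<Rightarrow>
   (real ^ 'n \<Rightarrow> real \<Rightarrow> real) \<Rightarrow> (real ^ 'n \<Rightarrow> real) \<Rightarrow> real ^ 'n \<Rightarrow> bool" where
  "vector_admissible f g F G dd \<longleftrightarrow>
     \<comment> \<open>D diagonal with positive entries\<close>
     (\<forall>i. 0 < dd $ i) \<and>
     \<comment> \<open>f : X x E \<rightarrow> X, g : X \<rightarrow> X\<close>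
     (\<forall>x\<in>cube. \<forall>e\<in>{0..1}. f x e \<in> cube) \<and> (\<forall>x\<in>cube. g x \<in> cube) \<and>
     \<comment> \<open>F'(x;e) = f(x;e) D, G'(x) = g(x) D\<close>
     (\<forall>x\<in>cube. \<forall>e\<in>{0..1}. ((\<lambda>y. F y e) has_derivative (\<lambda>h. dform dd (f x e) h)) (at x within cube)) \<and>
     (\<forall>x\<in>cube. (G has_derivative (\<lambda>h. dform dd (g x) h)) (at x within cube)) \<and>
     \<comment> \<open>normalization\<close>
     (\<forall>e\<in>{0..1}. F 0 e = 0) \<and> G 0 = 0 \<and>
     \<comment> \<open>(i) twice continuously differentiable\<close>
     C2_on (cube \<times> {0..1}) (\<lambda>p. f (fst p) (snd p)) \<and> C2_on cube g \<and>
     \<comment> \<open>(ii) monotone in x\<close>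
     (\<forall>e\<in>{0..1}. \<forall>x\<in>cube. \<forall>y\<in>cube. x \<le> y \<longrightarrow> f x e \<le> f y e) \<and>
     (\<forall>x\<in>cube. \<forall>y\<in>cube. x \<le> y \<longrightarrow> g x \<le> g y) \<and>
     \<comment> \<open>(iii) strictly increasing in e on X minus 0\<close>
     (\<forall>x\<in>cube - {0}. \<forall>e1\<in>{0..1}. \<forall>e2\<in>{0..1}. e1 < e2 \<longrightarrow>
        f x e1 \<le> f x e2 \<and> f x e1 \<noteq> f x e2) \<and>
     \<comment> \<open>(iv) boundary conditions\<close>
     (\<forall>e\<in>{0..1}. f 0 e = 0) \<and> (\<forall>x\<in>cube. f x 0 = 0) \<and> g 0 = 0 \<and>
     (\<forall>x\<in>cube. F x 0 = 0)"

definition potential ::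
  "(real ^ 'n \<Rightarrow> real ^ 'n) \<Rightarrow> (real ^ 'n \<Rightarrow> real \<Rightarrow> real) \<Rightarrow> (real ^ 'n \<Rightarrow> real) \<Rightarrow>
   real ^ 'n \<Rightarrow> real ^ 'n \<Rightarrow> real \<Rightarrow> real" where
  "potential g F G dd x e = dform dd (g x) x - G x - F (g x) e"

definition iterate_rec ::
  "(real ^ 'n \<Rightarrow> real \<Rightarrow> real ^ 'n) \<Rightarrow> (real ^ 'n \<Rightarrow> real ^ 'n) \<Rightarrow> real \<Rightarrow> real ^ 'n \<Rightarrow> nat \<Rightarrow> real ^ 'n" where
  "iterate_rec f g e x l = ((\<lambda>y. f (g y) e) ^^ l) x"

end

theory Submission
  imports Defs
begin

text \<open>
  Write T(y) = f(g(y);e).  Since f and g are monotone, T is monotone on the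
  cube, so if x and T(x) are comparable the orbit x, T x, T(T x), ... is monotone
  (coordinatewise increasing or decreasing).  Being bounded in the cube, it converges
  coordinatewise, hence to a limit L in the (closed) cube.

  For the potential, we use a first-order bound for a functional Phi whose gradient is
  phi(x) D with phi monotone: for comparable a, b in a convex set,
  phi(a) D (b - a)^T <= Phi(b) - Phi(a)  (mean value theorem along the segment).
  Applied to G with the comparable pair (a, T a) and to F(.;e) with (g a, g(T a)), this
  bound together with an algebraic identity for the bilinear form u D v^T shows
  U(T a) <= U(a).  Thus U decreases along the orbit, and since U is continuous on the
  cube, U(L) = lim U(T^l x) <= U(x).
\<close>

lemma dform_le_dform:
  assumes "\<forall>i. 0 < dd $ i" and "\<forall>i. 0 \<le> (u $ i - w $ i) * v $ i"
  shows "dform dd w v \<le> dform dd u v"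
proof -
  have "w $ i * dd $ i * v $ i \<le> u $ i * dd $ i * v $ i" for i
  proof -
    have "0 \<le> ((u $ i - w $ i) * v $ i) * dd $ i"
      using assms by (simp add: less_imp_le)
    then show ?thesis by (simp add: algebra_simps)
  qed
  then show ?thesis unfolding dform_def by (intro sum_mono)
qed

text \<open>The identity relating the potential at two points to the two first-order
  increments used in the descent step.\<close>
lemma dform_exchange:
  "dform dd gb b - dform dd ga a = dform dd ga (b - a) + dform dd b (gb - ga)"
  unfolding dform_def by (simp add: sum_subtractf[symmetric] sum.distrib[symmetric] algebra_simps)

lemma continuous_on_dform [continuous_intros]:
  assumes "continuous_on S u" "continuous_on S v"
  shows "continuous_on S (\<lambda>y. dform dd (u y) (v y))"
  unfolding dform_def by (intro continuous_intros continuous_on_component assms)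

lemma convex_cube: "convex cube"
  unfolding convex_def cube_def
proof (intro allI impI ballI conjI CollectI)
  fix x y :: "real ^ 'n" and u v :: real and i
  assume x: "x \<in> {x. \<forall>i. 0 \<le> x $ i \<and> x $ i \<le> 1}" and y: "y \<in> {x. \<forall>i. 0 \<le> x $ i \<and> x $ i \<le> 1}"
    and uv: "0 \<le> u" "0 \<le> v" "u + v = 1"
  have b: "0 \<le> x $ i" "x $ i \<le> 1" "0 \<le> y $ i" "y $ i \<le> 1" using x y by auto
  show "0 \<le> (u *\<^sub>R x + v *\<^sub>R y) $ i" using b uv by simp
  show "(u *\<^sub>R x + v *\<^sub>R y) $ i \<le> 1" using b uv by (simp add: convex_bound_le)
qed

lemma closed_cube: "closed cube"
  unfolding cube_def
  by (intro closed_Collect_all closed_Collect_conj closed_Collect_le continuous_intros)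

lemma monotone_sequence_in_cube_converges:
  fixes s :: "nat \<Rightarrow> real ^ 'n"
  assumes s_in: "\<And>l. s l \<in> cube"
    and mono: "(\<forall>l. s l \<le> s (Suc l)) \<or> (\<forall>l. s (Suc l) \<le> s l)"
  shows "\<exists>L\<in>cube. s \<longlonglongrightarrow> L"
proof -
  have conv: "convergent (\<lambda>l. s l $ i)" for i
  proof (rule Bseq_monoseq_convergent)
    show "Bseq (\<lambda>l. s l $ i)"
      using s_in by (intro BseqI'[of _ 1]) (auto simp: cube_def)
    show "monoseq (\<lambda>l. s l $ i)"
      unfolding monoseq_iff using mono
      by (auto intro!: incseq_SucI decseq_SucI simp: less_eq_vec_def)
  qed
  define L where "L = (\<chi> i. lim (\<lambda>l. s l $ i))"
  have "s \<longlonglongrightarrow> L"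
    by (rule vec_tendstoI) (use conv in \<open>simp add: L_def convergent_LIMSEQ_iff\<close>)
  moreover have "L \<in> cube"
    using closed_sequentially[OF closed_cube] s_in \<open>s \<longlonglongrightarrow> L\<close> by blast
  ultimately show ?thesis by blast
qed

text \<open>By the mean value theorem the increment equals phi(p) D (b - a)^T for some p on the
  segment, and p lies between a and b, so phi(p) - phi(a) has the sign of b - a.\<close>
lemma monotone_gradient_lower_bound:
  fixes Phi :: "real ^ 'n \<Rightarrow> real" and phi :: "real ^ 'n \<Rightarrow> real ^ 'n"
  assumes dd: "\<forall>i. 0 < dd $ i" and S: "convex S"
    and grad: "\<forall>y\<in>S. (Phi has_derivative (\<lambda>h. dform dd (phi y) h)) (at y within S)"
    and mono: "\<forall>y\<in>S. \<forall>z\<in>S. y \<le> z \<longrightarrow> phi y \<le> phi z"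
    and ab: "a \<in> S" "b \<in> S" "a \<le> b \<or> b \<le> a"
  shows "dform dd (phi a) (b - a) \<le> Phi b - Phi a"
proof -
  define p where "p t = a + t *\<^sub>R (b - a)" for t :: real
  define \<psi> where "\<psi> t = Phi (p t) - t * dform dd (phi a) (b - a)" for t
  have p_in: "p ` {0..1} \<subseteq> S"
  proof
    fix y assume "y \<in> p ` {0..1}"
    then obtain t where t: "0 \<le> t" "t \<le> 1" and y: "y = (1 - t) *\<^sub>R a + t *\<^sub>R b"
      by (auto simp: p_def algebra_simps)
    show "y \<in> S" unfolding y using convexD[OF S ab(1,2)] t by simp
  qed
  have dp: "(p has_derivative (\<lambda>h. h *\<^sub>R (b - a))) (at t within {0..1})" for t
    unfolding p_def by (auto intro!: derivative_eq_intros)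
  have "\<exists>\<xi>\<in>{0..1}. \<psi> 1 - \<psi> 0 =
      (\<lambda>h. dform dd (phi (p \<xi>)) (h *\<^sub>R (b - a)) - h * dform dd (phi a) (b - a)) (1 - 0)"
  proof (rule mvt_very_simple)
    fix t :: real assume "0 \<le> t" "t \<le> 1"
    then have "((\<lambda>t. Phi (p t)) has_derivative (\<lambda>h. dform dd (phi (p t)) (h *\<^sub>R (b - a)))) (at t within {0..1})"
      using has_derivative_in_compose2[of S Phi "\<lambda>y. dform dd (phi y)", OF grad[rule_format] p_in _ dp]
      by auto
    then show "(\<psi> has_derivative (\<lambda>h. dform dd (phi (p t)) (h *\<^sub>R (b - a)) - h * dform dd (phi a) (b - a)))
        (at t within {0..1})"
      unfolding \<psi>_def by (auto intro!: derivative_eq_intros)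
  qed simp
  then obtain \<xi> where \<xi>: "0 \<le> \<xi>" "\<xi> \<le> 1"
    and increment: "\<psi> 1 - \<psi> 0 = dform dd (phi (p \<xi>)) (b - a) - dform dd (phi a) (b - a)"
    by auto
  have p\<xi>: "p \<xi> \<in> S" using p_in \<xi> by auto
  have "dform dd (phi a) (b - a) \<le> dform dd (phi (p \<xi>)) (b - a)"
  proof (rule dform_le_dform[OF dd], rule allI)
    fix i
    from ab(3) show "0 \<le> (phi (p \<xi>) $ i - phi a $ i) * (b - a) $ i"
    proof
      assume "a \<le> b"
      then have "a \<le> p \<xi>" using \<xi> by (auto simp: p_def less_eq_vec_def)
      then have "phi a \<le> phi (p \<xi>)" using mono ab p\<xi> by blast
      with \<open>a \<le> b\<close> show ?thesis by (simp add: less_eq_vec_def)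
    next
      assume "b \<le> a"
      then have "p \<xi> \<le> a" using \<xi> by (auto simp: p_def less_eq_vec_def mult_nonneg_nonpos)
      then have "phi (p \<xi>) \<le> phi a" using mono ab p\<xi> by blast
      with \<open>b \<le> a\<close> show ?thesis by (auto simp: less_eq_vec_def intro!: mult_nonpos_nonpos)
    qed
  qed
  with increment have "0 \<le> \<psi> 1 - \<psi> 0" by simp
  then show ?thesis unfolding \<psi>_def p_def by simp
qed

lemma monotone_orbit:
  fixes T :: "'a::order \<Rightarrow> 'a"
  assumes maps: "\<forall>y\<in>S. T y \<in> S"
    and mono: "\<forall>y\<in>S. \<forall>z\<in>S. y \<le> z \<longrightarrow> T y \<le> T z"
    and x: "x \<in> S" and comparable: "x \<le> T x \<or> T x \<le> x"
  shows "(\<forall>l. (T ^^ l) x \<le> (T ^^ Suc l) x) \<or> (\<forall>l. (T ^^ Suc l) x \<le> (T ^^ l) x)"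
proof -
  have orbit_in: "(T ^^ l) x \<in> S" for l
    by (induction l) (use x maps in auto)
  from comparable show ?thesis
  proof
    assume "x \<le> T x"
    then have "(T ^^ l) x \<le> (T ^^ Suc l) x" for l
    proof (induction l)
      case (Suc l)
      then have "T ((T ^^ l) x) \<le> T ((T ^^ Suc l) x)"
        using mono orbit_in by blast
      then show ?case by simp
    qed simp
    then show ?thesis by blast
  next
    assume "T x \<le> x"
    then have "(T ^^ Suc l) x \<le> (T ^^ l) x" for l
    proof (induction l)
      case (Suc l)
      then have "T ((T ^^ Suc l) x) \<le> T ((T ^^ l) x)"
        using mono orbit_in by blast
      then show ?case by simp
    qed simp
    then show ?thesis by blast
  qed
qed

lemma vector_admissibleD:
  assumes "vector_admissible f g F G dd" and "e \<in> {0..1}"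
  shows admissible_dd_pos: "\<forall>i. 0 < dd $ i"
    and admissible_f_cube: "\<forall>y\<in>cube. f y e \<in> cube"
    and admissible_g_cube: "\<forall>y\<in>cube. g y \<in> cube"
    and admissible_F_grad: "\<forall>y\<in>cube. ((\<lambda>y. F y e) has_derivative (\<lambda>h. dform dd (f y e) h)) (at y within cube)"
    and admissible_G_grad: "\<forall>y\<in>cube. (G has_derivative (\<lambda>h. dform dd (g y) h)) (at y within cube)"
    and admissible_g_C2: "C2_on cube g"
    and admissible_f_mono: "\<forall>y\<in>cube. \<forall>z\<in>cube. y \<le> z \<longrightarrow> f y e \<le> f z e"
    and admissible_g_mono: "\<forall>y\<in>cube. \<forall>z\<in>cube. y \<le> z \<longrightarrow> g y \<le> g z"
  using assms unfolding vector_admissible_def by blast+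

lemma C2_on_continuous_on:
  assumes "C2_on S h"
  shows "continuous_on S h"
proof -
  from assms obtain h' where "\<forall>x\<in>S. (h has_derivative blinfun_apply (h' x)) (at x within S)"
    unfolding C2_on_def by blast
  then show ?thesis
    using has_derivative_continuous continuous_on_eq_continuous_within by blast
qed

lemma potential_continuous_on:
  assumes adm: "vector_admissible f g F G dd" and e: "e \<in> {0..1}"
  shows "continuous_on cube (\<lambda>y. potential g F G dd y e)"
proof -
  have cont_grad: "continuous_on cube Phi"
    if "\<forall>y\<in>cube. (Phi has_derivative (\<lambda>h. dform dd (phi y) h)) (at y within cube)"
    for Phi phi
    using that has_derivative_continuous continuous_on_eq_continuous_within by blast
  have g: "continuous_on cube g"
    by (rule C2_on_continuous_on[OF admissible_g_C2[OF adm e]])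
  have "continuous_on cube (\<lambda>y. F (g y) e)"
    by (rule continuous_on_compose2[OF cont_grad[OF admissible_F_grad[OF adm e]] g])
      (use admissible_g_cube[OF adm e] in auto)
  then show ?thesis
    unfolding potential_def
    by (intro continuous_intros g cont_grad[OF admissible_G_grad[OF adm e]])
qed

text \<open>With the first-order bounds
  g(a) D (b - a)^T <= G(b) - G(a) and b D (g b - g a)^T <= F(g b;e) - F(g a;e) the
  claim is exactly the identity of lemma dform_exchange.\<close>
lemma potential_step_decrease:
  assumes adm: "vector_admissible f g F G dd" and e: "e \<in> {0..1}"
    and a: "a \<in> cube" and comparable: "a \<le> f (g a) e \<or> f (g a) e \<le> a"
  shows "potential g F G dd (f (g a) e) e \<le> potential g F G dd a e"
proof -
  note dd = admissible_dd_pos[OF adm e]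
  note g_cube = admissible_g_cube[OF adm e]
  note g_mono = admissible_g_mono[OF adm e]
  define b where "b = f (g a) e"
  have b: "b \<in> cube" using a g_cube admissible_f_cube[OF adm e] by (simp add: b_def)
  have G_bound: "dform dd (g a) (b - a) \<le> G b - G a"
    using monotone_gradient_lower_bound[OF dd convex_cube admissible_G_grad[OF adm e] g_mono a b]
      comparable by (simp add: b_def)
  have "g a \<le> g b \<or> g b \<le> g a"
    using comparable g_mono a b by (auto simp: b_def)
  then have F_bound: "dform dd b (g b - g a) \<le> F (g b) e - F (g a) e"
    using monotone_gradient_lower_bound[OF dd convex_cube admissible_F_grad[OF adm e]
        admissible_f_mono[OF adm e]] a b g_cube by (simp add: b_def)
  show ?thesis
    using G_bound F_bound dform_exchange[of dd "g b" b "g a" a]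
    unfolding potential_def b_def[symmetric] by linarith
qed

theorem lemma4:
  fixes f :: "real ^ 'n \<Rightarrow> real \<Rightarrow> real ^ 'n" and g :: "real ^ 'n \<Rightarrow> real ^ 'n"
    and F :: "real ^ 'n \<Rightarrow> real \<Rightarrow> real" and G :: "real ^ 'n \<Rightarrow> real"
    and dd :: "real ^ 'n" and x :: "real ^ 'n" and e :: real
  assumes "vector_admissible f g F G dd"
    and "x \<in> cube" and "e \<in> {0..1}"
    and "x \<le> f (g x) e \<or> f (g x) e \<le> x"
  shows "\<exists>L. iterate_rec f g e x \<longlonglongrightarrow> L \<and>
             potential g F G dd x e \<ge> potential g F G dd L e"
proof -
  define T where "T = (\<lambda>y. f (g y) e)"
  define s where "s = iterate_rec f g e x"
  define U where "U y = potential g F G dd y e" for y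
  have s: "s l = (T ^^ l) x" for l by (simp add: s_def iterate_rec_def T_def)
  have T_cube: "\<forall>y\<in>cube. T y \<in> cube"
    using admissible_f_cube[OF assms(1,3)] admissible_g_cube[OF assms(1,3)] by (simp add: T_def)
  have T_mono: "\<forall>y\<in>cube. \<forall>z\<in>cube. y \<le> z \<longrightarrow> T y \<le> T z"
    using admissible_f_mono[OF assms(1,3)] admissible_g_mono[OF assms(1,3)]
      admissible_g_cube[OF assms(1,3)] by (simp add: T_def)
  have s_cube: "s l \<in> cube" for l
    unfolding s by (induction l) (use assms(2) T_cube in auto)
  have s_mono: "(\<forall>l. s l \<le> s (Suc l)) \<or> (\<forall>l. s (Suc l) \<le> s l)"
    unfolding s using monotone_orbit[OF T_cube T_mono assms(2)] assms(4) by (simp add: T_def)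
  obtain L where L: "L \<in> cube" "s \<longlonglongrightarrow> L"
    using monotone_sequence_in_cube_converges[OF s_cube s_mono] by blast
  have "U (s (Suc l)) \<le> U (s l)" for l
    using potential_step_decrease[OF assms(1,3) s_cube[of l]] s_mono
    by (auto simp: U_def s T_def)
  then have "U (s l) \<le> U x" for l
    by (induction l) (auto simp: s intro: order_trans)
  moreover have "(\<lambda>l. U (s l)) \<longlonglongrightarrow> U L"
    using continuous_on_tendsto_compose[OF potential_continuous_on[OF assms(1,3)] L(2) L(1)] s_cube
    by (simp add: U_def)
  ultimately have "U L \<le> U x"
    by (intro LIMSEQ_le_const2) auto
  then show ?thesis using L(2) unfolding U_def s_def by blast
qed

end
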